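(* Let $A$ be a nontrivial MV-algebra (i.e. $0\ne 1$) and $\operatorname{Der}(A)$ the set of $(\odot,\vee)$-derivations on $A$. Then: (1) $|\operatorname{Der}(A)|=2$ iff $|A|=2$; (2) $|\operatorname{Der}(A)|=5$ iff $|A|=3$; (3) $|\operatorname{Der}(A)|=9$ iff $|A|=4$.
   Context: An MV-algebra is an algebra $(A,\oplus,{}^*,0)$ of type $(2,1,0)$ satisfying: $x\oplus(y\oplus z)=(x\oplus y)\oplus z$, $x\oplus y=y\oplus x$, $x\oplus 0=x$, $x^{**}=x$, $x\oplus 0^*=0^*$, $(x^*\oplus y)^*\oplus y=(y^*\oplus x)^*\oplus x$. Put $1=0^*$ and $x\odot y=(x^*\oplus y^* )^*$. The natural order is $x\le y$ iff $x^*\oplus y=1$, with lattice operations $x\vee y=(x\odot y^* )\oplus y$, $x\wedge y=x\odot(x^*\oplus y)$. A $(\odot,\vee)$-derivation on $A$ is a map $d:A\to A$ with $d(x\odot y)=(d(x)\odot y)\vee(x\odot d(y))$ for all $x,y\in A$. *)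

theory Defs
  imports Main
begin

definition mv_algebra :: "('a \<Rightarrow> 'a \<Rightarrow> 'a) \<Rightarrow> ('a \<Rightarrow> 'a) \<Rightarrow> 'a \<Rightarrow> bool" where
  "mv_algebra oplus neg zero \<longleftrightarrow>
     (\<forall>x y z. oplus x (oplus y z) = oplus (oplus x y) z) \<and>
     (\<forall>x y. oplus x y = oplus y x) \<and>
     (\<forall>x. oplus x zero = x) \<and>
     (\<forall>x. neg (neg x) = x) \<and>
     (\<forall>x. oplus x (neg zero) = neg zero) \<and>
     (\<forall>x y. oplus (neg (oplus (neg x) y)) y = oplus (neg (oplus (neg y) x)) x)"

definition mv_odot :: "('a \<Rightarrow> 'a \<Rightarrow> 'a) \<Rightarrow> ('a \<Rightarrow> 'a) \<Rightarrow> 'a \<Rightarrow> 'a \<Rightarrow> 'a" where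
  "mv_odot oplus neg x y = neg (oplus (neg x) (neg y))"

definition mv_join :: "('a \<Rightarrow> 'a \<Rightarrow> 'a) \<Rightarrow> ('a \<Rightarrow> 'a) \<Rightarrow> 'a \<Rightarrow> 'a \<Rightarrow> 'a" where
  "mv_join oplus neg x y = oplus (mv_odot oplus neg x (neg y)) y"

definition mv_derivations :: "('a \<Rightarrow> 'a \<Rightarrow> 'a) \<Rightarrow> ('a \<Rightarrow> 'a) \<Rightarrow> ('a \<Rightarrow> 'a) set" where
  "mv_derivations oplus neg =
     {d. \<forall>x y. d (mv_odot oplus neg x y) =
                mv_join oplus neg (mv_odot oplus neg (d x) y) (mv_odot oplus neg x (d y))}"

end

theory Submission
  imports Defs
begin

text \<open>
  Every (\<odot>,\<or>)-derivation d satisfies d 0 = 0 and x \<odot> d 1 \<le> d x \<le> x, and conversely,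
  whenever e \<le> c, multiplication by c redefined to take the value e at 1 is a derivation.
  In an algebra with at most four elements these bounds pin down the values of a derivation
  at the nonzero elements, which determine it; listing the possibilities gives 2 derivations
  on the two-element algebra, 5 on the three-element chain and 9 on each of the two
  four-element algebras (the chain and the Boolean square). Once there are two elements
  strictly between 0 and 1, these multiplication-type derivations number at least
  2|A| \<ge> 10 when A is finite, and infinitely many when A is infinite (where card yields 0).
\<close>

locale mv =
  fixes oplus :: "'a \<Rightarrow> 'a \<Rightarrow> 'a" (infixl "\<oplus>" 65) and neg :: "'a \<Rightarrow> 'a" and zero :: 'a
  assumes mv_algebra: "mv_algebra oplus neg zero"
begin

abbreviation one :: 'a where "one \<equiv> neg zero"
abbreviation odot :: "'a \<Rightarrow> 'a \<Rightarrow> 'a" (infixl "\<odot>" 70) where "x \<odot> y \<equiv> mv_odot (\<oplus>) neg x y"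
abbreviation join :: "'a \<Rightarrow> 'a \<Rightarrow> 'a" (infixl "\<squnion>" 65) where "x \<squnion> y \<equiv> mv_join (\<oplus>) neg x y"
abbreviation Der :: "('a \<Rightarrow> 'a) set" where "Der \<equiv> mv_derivations (\<oplus>) neg"

definition le :: "'a \<Rightarrow> 'a \<Rightarrow> bool" (infix "\<preceq>" 50) where "x \<preceq> y \<longleftrightarrow> neg x \<oplus> y = one"

lemma oplus_assoc: "x \<oplus> (y \<oplus> z) = x \<oplus> y \<oplus> z"
  and oplus_commute: "x \<oplus> y = y \<oplus> x"
  and oplus_zero: "x \<oplus> zero = x"
  and neg_neg [simp]: "neg (neg x) = x"
  and oplus_one [simp]: "x \<oplus> one = one"
  and lukasiewicz: "neg (neg x \<oplus> y) \<oplus> y = neg (neg y \<oplus> x) \<oplus> x"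
  using mv_algebra unfolding mv_algebra_def by blast+

lemma zero_oplus [simp]: "zero \<oplus> x = x"
  by (metis oplus_commute oplus_zero)

lemma one_oplus [simp]: "one \<oplus> x = one"
  by (metis oplus_commute oplus_one)

lemma oplus_neg_self: "x \<oplus> neg x = one"
  using lukasiewicz[of x one] by (simp add: oplus_commute oplus_zero)

lemma neg_eq_iff [simp]: "neg x = neg y \<longleftrightarrow> x = y"
  by (metis neg_neg)

lemma neg_eq_zero_iff [simp]: "neg x = zero \<longleftrightarrow> x = one"
  and neg_eq_one_iff [simp]: "neg x = one \<longleftrightarrow> x = zero"
  by (metis neg_neg)+

lemma odot_def': "x \<odot> y = neg (neg x \<oplus> neg y)"
  by (simp add: mv_odot_def)

lemma odot_commute: "x \<odot> y = y \<odot> x"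
  by (simp add: odot_def' oplus_commute)

lemma odot_assoc: "x \<odot> y \<odot> z = x \<odot> (y \<odot> z)"
  by (simp add: odot_def' oplus_assoc)

lemma odot_left_commute: "x \<odot> (y \<odot> z) = y \<odot> (x \<odot> z)"
  by (metis odot_assoc odot_commute)

lemma odot_one [simp]: "x \<odot> one = x" and one_odot [simp]: "one \<odot> x = x"
  by (simp_all add: odot_def' oplus_zero)

lemma odot_zero [simp]: "x \<odot> zero = zero" and zero_odot [simp]: "zero \<odot> x = zero"
  by (simp_all add: odot_def')

lemma odot_neg_self: "x \<odot> neg x = zero"
  by (simp add: odot_def' oplus_commute oplus_neg_self)

lemma oplus_eq_zero: "x \<oplus> y = zero \<Longrightarrow> x = zero"
proof -
  assume xy: "x \<oplus> y = zero"
  have "neg x \<oplus> (x \<oplus> y) = one"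
    by (metis oplus_assoc oplus_commute oplus_neg_self oplus_one)
  then show ?thesis using xy by (simp add: oplus_zero)
qed

lemma odot_eq_one: "x \<odot> y = one \<Longrightarrow> x = one"
  unfolding odot_def' using oplus_eq_zero by fastforce

lemma join_def': "x \<squnion> y = neg (neg x \<oplus> y) \<oplus> y"
  by (simp add: mv_join_def odot_def')

lemma join_commute: "x \<squnion> y = y \<squnion> x"
  by (simp add: join_def' lukasiewicz)

lemma join_eq_zero: "x \<squnion> y = zero \<Longrightarrow> x = zero"
proof -
  assume xy: "x \<squnion> y = zero"
  then have "y = zero" unfolding join_def' by (metis oplus_commute oplus_eq_zero)
  with xy show ?thesis by (simp add: join_def' oplus_zero)
qed

lemma le_iff_odot_neg: "x \<preceq> y \<longleftrightarrow> x \<odot> neg y = zero"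
  by (simp add: le_def odot_def')

lemma le_refl [simp]: "x \<preceq> x"
  by (simp add: le_def oplus_commute oplus_neg_self)

lemma zero_le [simp]: "zero \<preceq> x" and le_one [simp]: "x \<preceq> one"
  by (simp_all add: le_def)

lemma join_absorb2: "x \<preceq> y \<Longrightarrow> x \<squnion> y = y"
  by (simp add: le_def join_def')

lemma join_absorb1: "y \<preceq> x \<Longrightarrow> x \<squnion> y = x"
  by (metis join_absorb2 join_commute)

lemma join_idem [simp]: "x \<squnion> x = x"
  by (simp add: join_absorb2)

lemma le_antisym: "x \<preceq> y \<Longrightarrow> y \<preceq> x \<Longrightarrow> x = y"
  by (metis join_absorb1 join_absorb2)

lemma le_join2: "y \<preceq> x \<squnion> y"
  unfolding le_def mv_join_def by (metis oplus_assoc oplus_commute oplus_neg_self oplus_one)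

lemma le_zero_iff [simp]: "x \<preceq> zero \<longleftrightarrow> x = zero"
  by (metis le_antisym zero_le)

lemma one_le_iff [simp]: "one \<preceq> x \<longleftrightarrow> x = one"
  by (metis le_antisym le_one)

lemma odot_le: "x \<odot> y \<preceq> x"
  unfolding le_iff_odot_neg by (metis odot_assoc odot_commute odot_neg_self odot_zero)

lemma odot_mono: "x \<preceq> y \<Longrightarrow> x \<odot> z \<preceq> y \<odot> z"
proof -
  assume "x \<preceq> y"
  then have xy: "neg x \<oplus> y = one" by (simp add: le_def)
  have "neg z \<oplus> y \<odot> z = neg (z \<oplus> y) \<oplus> y"
    using lukasiewicz[of y "neg z"] by (simp add: odot_def' oplus_commute)
  then have "neg (x \<odot> z) \<oplus> y \<odot> z = neg x \<oplus> y \<oplus> neg (z \<oplus> y)"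
    by (simp add: odot_def' oplus_assoc[symmetric]) (metis oplus_commute)
  then show ?thesis using xy unfolding le_def by (metis one_oplus)
qed

section \<open>Bounds on derivations\<close>

lemma derivationD: "d \<in> Der \<Longrightarrow> d (x \<odot> y) = d x \<odot> y \<squnion> x \<odot> d y"
  by (simp add: mv_derivations_def)

lemma derivation_zero: "d \<in> Der \<Longrightarrow> d zero = zero"
  using derivationD[of d zero zero] by simp

lemma derivation_le: "d \<in> Der \<Longrightarrow> d x \<preceq> x"
proof -
  assume d: "d \<in> Der"
  have "d x \<odot> neg x \<squnion> x \<odot> d (neg x) = zero"
    using derivationD[OF d, of x "neg x"] derivation_zero[OF d] by (simp add: odot_neg_self)
  then show ?thesis unfolding le_iff_odot_neg by (rule join_eq_zero)
qed

lemma derivation_ge: "d \<in> Der \<Longrightarrow> x \<odot> d one \<preceq> d x"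
  using derivationD[of d x one] le_join2[of "x \<odot> d one" "d x"] by simp

lemma derivation_eq_self: "d \<in> Der \<Longrightarrow> x \<odot> d one = x \<Longrightarrow> d x = x"
  using derivation_ge[of d x] derivation_le[of d x] le_antisym by simp

lemma derivation_eqI:
  assumes "d \<in> Der" "d' \<in> Der" "\<And>x. x \<noteq> zero \<Longrightarrow> d x = d' x"
  shows "d = d'"
  using assms derivation_zero by (metis ext)

lemma odot_upd_in_derivations:
  assumes "e \<preceq> c"
  shows "((\<odot>) c)(one := e) \<in> Der"
  unfolding mv_derivations_def
proof (intro CollectI allI)
  fix x y
  let ?d = "((\<odot>) c)(one := e)"
  consider "x = one" "y = one" | "x = one" "y \<noteq> one" | "x \<noteq> one" "y = one"
    | "x \<noteq> one" "y \<noteq> one" by blast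
  then show "?d (x \<odot> y) = ?d x \<odot> y \<squnion> x \<odot> ?d y"
  proof cases
    case 1
    then show ?thesis by simp
  next
    case 2
    then show ?thesis using odot_mono[OF assms, of y] by (simp add: join_absorb2 odot_commute)
  next
    case 3
    then show ?thesis using odot_mono[OF assms, of x] by (simp add: join_absorb1 odot_commute)
  next
    case 4
    then have "x \<odot> y \<noteq> one" using odot_eq_one by blast
    with 4 show ?thesis by (simp add: odot_assoc odot_left_commute)
  qed
qed

lemma odot_in_derivations: "(\<odot>) c \<in> Der"
  using odot_upd_in_derivations[OF le_refl, of c] by (simp add: fun_upd_idem)

section \<open>Algebras with at most four elements\<close>

lemma inj_on_map_derivations:
  assumes "\<And>x. x \<noteq> zero \<Longrightarrow> x \<in> set xs"
  shows "inj_on (\<lambda>d. map d xs) Der"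
  by (rule inj_onI) (use assms in \<open>auto intro: derivation_eqI\<close>)

lemma card_derivations_via_values:
  assumes "\<And>x. x \<noteq> zero \<Longrightarrow> x \<in> set xs" and "(\<lambda>d. map d xs) ` Der = T"
  shows "card Der = card T"
  using card_image[OF inj_on_map_derivations[OF assms(1)]] assms(2) by simp

lemma map_odot_upd_in_image: "e \<preceq> c \<Longrightarrow> map (((\<odot>) c)(one := e)) xs \<in> (\<lambda>d. map d xs) ` Der"
  using odot_upd_in_derivations by blast

lemma card_derivations_two_elements:
  assumes U: "UNIV = {zero, one}" and nontrivial: "zero \<noteq> one"
  shows "card Der = 2"
proof -
  have "(\<lambda>d. map d [one]) ` Der = {[zero], [one]}"
  proof
    show "(\<lambda>d. map d [one]) ` Der \<subseteq> {[zero], [one]}"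
      using U by auto
    show "{[zero], [one]} \<subseteq> (\<lambda>d. map d [one]) ` Der"
      using map_odot_upd_in_image[of zero zero "[one]"] map_odot_upd_in_image[of one one "[one]"]
      by simp
  qed
  then have "card Der = card {[zero], [one]}"
    by (rule card_derivations_via_values[rotated]) (use U in auto)
  then show ?thesis using nontrivial by simp
qed

lemma card_derivations_three_elements:
  assumes U: "UNIV = {zero, m, one}" and dist: "distinct [zero, m, one]"
  shows "card Der = 5"
proof -
  have "neg m \<in> {zero, m, one}" using U by blast
  then have "neg m = m" using dist by auto
  then have mm: "m \<odot> m = zero" using odot_neg_self[of m] by simp
  let ?T = "{[zero, zero], [zero, m], [m, zero], [m, m], [m, one]}"
  have "(\<lambda>d. map d [m, one]) ` Der = ?T"
  proof
    show "(\<lambda>d. map d [m, one]) ` Der \<subseteq> ?T"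
    proof (rule image_subsetI)
      fix d assume d: "d \<in> Der"
      have "d m \<in> {zero, m, one}" "d one \<in> {zero, m, one}" using U by blast+
      moreover have "d m \<noteq> one" using derivation_le[OF d, of m] dist by auto
      moreover have "d one = one \<Longrightarrow> d m = m" using derivation_eq_self[OF d] by simp
      ultimately show "map d [m, one] \<in> ?T" by auto
    qed
    show "?T \<subseteq> (\<lambda>d. map d [m, one]) ` Der"
      using dist mm map_odot_upd_in_image[of zero zero "[m, one]"] map_odot_upd_in_image[of m m "[m, one]"]
        map_odot_upd_in_image[of e one "[m, one]" for e]
      by simp
  qed
  then have "card Der = card ?T"
    by (rule card_derivations_via_values[rotated]) (use U in auto)
  then show ?thesis using dist by simp
qed

lemma card_derivations_four_chain:
  assumes U: "UNIV = {zero, a, b, one}" and dist: "distinct [zero, a, b, one]"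
    and nab: "neg a = b" and aa: "a \<odot> a = zero" and bb: "b \<odot> b = a"
  shows "card Der = 9"
proof -
  have ab: "a \<odot> b = zero" and ba: "b \<odot> a = zero"
    using odot_neg_self[of a] nab odot_commute by metis+
  have "neg b = a" using nab by force
  then have a_le_b: "a \<preceq> b" using aa by (simp add: le_iff_odot_neg)
  let ?T = "{[zero, zero, zero], [zero, zero, a], [zero, a, zero], [zero, a, a], [zero, a, b],
             [a, b, zero], [a, b, a], [a, b, b], [a, b, one]}"
  have "(\<lambda>d. map d [a, b, one]) ` Der = ?T"
  proof
    show "(\<lambda>d. map d [a, b, one]) ` Der \<subseteq> ?T"
    proof (rule image_subsetI)
      fix d assume d: "d \<in> Der"
      have "d b \<in> {zero, a, b, one}" and d_one: "d one \<in> {zero, a, b, one}" using U by blast+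
      moreover have "d b \<noteq> one" using derivation_le[OF d, of b] dist by auto
      ultimately have d_b: "d b \<in> {zero, a, b}" by blast
      have d_a: "d a = d b \<odot> b"
        using derivationD[OF d, of b b] bb by (simp add: odot_commute)
      have "d one = b \<Longrightarrow> d b \<noteq> zero"
        using derivation_ge[OF d, of b] bb dist by auto
      moreover have "d one = one \<Longrightarrow> d b = b" using derivation_eq_self[OF d] by simp
      ultimately show "map d [a, b, one] \<in> ?T"
        using d_b d_one by (elim insertE emptyE) (simp_all add: d_a ab bb)
    qed
    show "?T \<subseteq> (\<lambda>d. map d [a, b, one]) ` Der"
      using dist aa ab ba bb a_le_b map_odot_upd_in_image[of zero zero "[a, b, one]"]
        map_odot_upd_in_image[of a a "[a, b, one]"] map_odot_upd_in_image[of e b "[a, b, one]" for e]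
        map_odot_upd_in_image[of e one "[a, b, one]" for e]
      by simp
  qed
  then have "card Der = card ?T"
    by (rule card_derivations_via_values[rotated]) (use U in auto)
  then show ?thesis using dist by simp
qed

lemma card_derivations_four_boolean:
  assumes U: "UNIV = {zero, a, b, one}" and dist: "distinct [zero, a, b, one]"
    and nab: "neg a = b" and aa: "a \<odot> a = a" and bb: "b \<odot> b = b"
  shows "card Der = 9"
proof -
  have ab: "a \<odot> b = zero" and ba: "b \<odot> a = zero"
    using odot_neg_self[of a] nab odot_commute by metis+
  have nba: "neg b = a" using nab by force
  let ?T = "{[zero, zero, zero], [a, zero, zero], [a, zero, a], [zero, b, zero], [zero, b, b],
             [a, b, zero], [a, b, a], [a, b, b], [a, b, one]}"
  have "(\<lambda>d. map d [a, b, one]) ` Der = ?T"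
  proof
    show "(\<lambda>d. map d [a, b, one]) ` Der \<subseteq> ?T"
    proof (rule image_subsetI)
      fix d assume d: "d \<in> Der"
      have "d a \<in> {zero, a, b, one}" "d b \<in> {zero, a, b, one}" and d_one: "d one \<in> {zero, a, b, one}"
        using U by blast+
      moreover have "\<not> b \<preceq> a" "\<not> a \<preceq> b" using aa bb nab nba dist by (auto simp: le_iff_odot_neg)
      then have "d a \<noteq> b" "d b \<noteq> a"
        using derivation_le[OF d, of a] derivation_le[OF d, of b] by metis+
      moreover have "d a \<noteq> one" "d b \<noteq> one"
        using derivation_le[OF d, of a] derivation_le[OF d, of b] dist by auto
      ultimately have d_a: "d a \<in> {zero, a}" and d_b: "d b \<in> {zero, b}" by blast+
      have "d one \<in> {a, one} \<Longrightarrow> d a = a" "d one \<in> {b, one} \<Longrightarrow> d b = b"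
        using derivation_eq_self[OF d] aa bb by auto
      then show "map d [a, b, one] \<in> ?T"
        using d_a d_b d_one by (elim insertE emptyE) simp_all
    qed
    show "?T \<subseteq> (\<lambda>d. map d [a, b, one]) ` Der"
      using dist aa ab ba bb map_odot_upd_in_image[of zero zero "[a, b, one]"]
        map_odot_upd_in_image[of e a "[a, b, one]" for e] map_odot_upd_in_image[of e b "[a, b, one]" for e]
        map_odot_upd_in_image[of e one "[a, b, one]" for e]
      by simp
  qed
  then have "card Der = card ?T"
    by (rule card_derivations_via_values[rotated]) (use U in auto)
  then show ?thesis using dist by simp
qed

lemma idempotent_complement_eq_one:
  assumes npq: "neg p = q" and pp: "p \<odot> p = zero" and qq: "q \<odot> q = q"
  shows "q = one"
proof -
  have nqp: "neg q = p" using npq by force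
  have "p \<squnion> q = q"
    using pp by (simp add: join_def' npq odot_def' nqp)
  moreover have "q \<squnion> p = one"
    using qq oplus_neg_self[of q] by (simp add: join_def' nqp odot_def' npq oplus_commute)
  ultimately show ?thesis by (simp add: join_commute)
qed

lemma four_element_neg_swap:
  assumes U: "UNIV = {zero, p, q, one}" and dist: "distinct [zero, p, q, one]"
  shows "neg p = q"
proof (rule ccontr)
  assume "neg p \<noteq> q"
  have "neg p \<in> {zero, p, q, one}" "neg q \<in> {zero, p, q, one}" using U by blast+
  then have np: "neg p = p" and nq: "neg q = q"
    using \<open>neg p \<noteq> q\<close> dist by (auto simp: neg_eq_iff[symmetric, of q "neg p"])
  have le_iff: "p \<preceq> q \<longleftrightarrow> p \<odot> q = zero" "q \<preceq> p \<longleftrightarrow> p \<odot> q = zero"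
    by (simp_all add: le_iff_odot_neg np nq odot_commute)
  have "p \<odot> q \<preceq> p" "p \<odot> q \<preceq> q" using odot_le odot_commute by metis+
  moreover have "p \<odot> q \<in> {zero, p, q, one}" using U by blast
  moreover have "p \<odot> q \<noteq> one" using odot_eq_one dist by auto
  ultimately have "p \<odot> q = zero" using le_iff by (metis insertE singletonD)
  then have "p = q" using le_iff le_antisym by blast
  with dist show False by simp
qed

lemma four_element_cases:
  assumes U: "UNIV = {zero, p, q, one}" and dist: "distinct [zero, p, q, one]"
  obtains (chain) a b where "UNIV = {zero, a, b, one}" "distinct [zero, a, b, one]"
      "neg a = b" "a \<odot> a = zero" "b \<odot> b = a"
  | (boolean) "neg p = q" "p \<odot> p = p" "q \<odot> q = q"
proof -
  have npq: "neg p = q" using four_element_neg_swap[OF U dist] .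
  then have nqp: "neg q = p" by force
  have pq: "p \<odot> q = zero" and qp: "q \<odot> p = zero"
    using odot_neg_self[of p] npq odot_commute by metis+
  have U': "UNIV = {zero, q, p, one}" and dist': "distinct [zero, q, p, one]"
    using U dist by auto
  have "p \<odot> p \<in> {zero, p, q, one}" "q \<odot> q \<in> {zero, p, q, one}" using U by blast+
  moreover have "p \<odot> p \<noteq> one" "q \<odot> q \<noteq> one" using odot_eq_one dist by auto
  ultimately have pp: "p \<odot> p \<in> {zero, p, q}" and qq: "q \<odot> q \<in> {zero, p, q}" by blast+
  show thesis
  proof (cases "p \<odot> p = q \<or> q \<odot> q = p")
    case True
    then show thesis
    proof
      assume pp_q: "p \<odot> p = q"
      then have "q \<odot> q = zero" by (metis odot_assoc qp zero_odot)
      with pp_q show thesis by (intro chain[OF U' dist' nqp])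
    next
      assume qq_p: "q \<odot> q = p"
      then have "p \<odot> p = zero" by (metis odot_assoc pq zero_odot)
      with qq_p show thesis by (intro chain[OF U dist npq])
    qed
  next
    case False
    with pp qq have pp': "p \<odot> p \<in> {zero, p}" and qq': "q \<odot> q \<in> {zero, q}" by auto
    have "p \<odot> p \<noteq> zero \<or> q \<odot> q \<noteq> zero"
      using le_antisym[of p q] dist by (auto simp: le_iff_odot_neg npq nqp)
    moreover have "p \<odot> p = zero \<Longrightarrow> q \<odot> q \<noteq> q"
      using idempotent_complement_eq_one[OF npq] dist by auto
    moreover have "q \<odot> q = zero \<Longrightarrow> p \<odot> p \<noteq> p"
      using idempotent_complement_eq_one[OF nqp] dist by auto
    ultimately show thesis using pp' qq' boolean[OF npq] by blast
  qed
qed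

lemma card_derivations_four_elements:
  assumes U: "UNIV = {zero, p, q, one}" and dist: "distinct [zero, p, q, one]"
  shows "card Der = 9"
  using U dist
proof (cases rule: four_element_cases)
  case chain
  then show ?thesis by (rule card_derivations_four_chain)
next
  case boolean
  then show ?thesis by (rule card_derivations_four_boolean[OF U dist])
qed

section \<open>Algebras with more than four elements\<close>

lemma inj_odot: "inj (\<odot>)"
  by (rule injI) (metis odot_one)

lemma infinite_derivations: "infinite (UNIV :: 'a set) \<Longrightarrow> infinite Der"
  using odot_in_derivations inj_odot
  by (metis finite_imageD finite_subset image_subsetI)

lemma finite_derivations:
  assumes "finite (UNIV :: 'a set)" shows "finite Der"
proof -
  have "finite (UNIV :: ('a \<Rightarrow> 'a) set)"
    using finite_set_of_finite_funs[OF assms assms, of undefined] by simp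
  then show ?thesis by (rule finite_subset[rotated]) simp
qed

lemma middle_odot_nonzero:
  assumes cd: "c \<noteq> d" "c \<notin> {zero, one}" "d \<notin> {zero, one}"
  shows "\<exists>c' x. c' \<notin> {zero, one} \<and> x \<noteq> one \<and> c' \<odot> x \<noteq> zero"
proof (rule ccontr)
  assume "\<not> ?thesis"
  then have annihilate: "u \<odot> v = zero" if "u \<notin> {zero, one}" "v \<noteq> one" for u v
    using that by blast
  have complement: "u = neg v" if "u \<notin> {zero, one}" "v \<notin> {zero, one}" for u v
  proof (rule le_antisym)
    show "u \<preceq> neg v" using annihilate[of u v] that by (simp add: le_iff_odot_neg)
    show "neg v \<preceq> u" using annihilate[of "neg v" "neg u"] that by (simp add: le_iff_odot_neg)
  qed
  have "c = neg d" "c = neg c" using complement[OF cd(2,3)] complement[OF cd(2,2)] .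
  with cd show False by simp
qed

lemma odot_ne_odot_upd_one:
  assumes "e \<noteq> one" and m: "m \<notin> {zero, one}"
  shows "(\<odot>) c \<noteq> ((\<odot>) one)(one := e)"
proof
  assume eq: "(\<odot>) c = ((\<odot>) one)(one := e)"
  have "c = e" using fun_cong[OF eq, of one] by simp
  show False
  proof (cases "e = zero")
    case True
    then show False using fun_cong[OF eq, of m] \<open>c = e\<close> m by simp
  next
    case False
    then show False using fun_cong[OF eq, of "neg e"] \<open>c = e\<close> \<open>e \<noteq> one\<close>
      by (simp add: odot_neg_self)
  qed
qed

lemma odot_upd_zero_ne_odot:
  assumes "x \<noteq> one" and "c \<odot> x \<noteq> zero"
  shows "((\<odot>) c)(one := zero) \<noteq> (\<odot>) c'"
proof
  assume eq: "((\<odot>) c)(one := zero) = (\<odot>) c'"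
  have "c' = zero" using fun_cong[OF eq, of one] by simp
  then show False using fun_cong[OF eq, of x] assms by simp
qed

lemma odot_upd_zero_ne_odot_upd_one:
  assumes "c \<notin> {zero, one}"
  shows "((\<odot>) c)(one := zero) \<noteq> ((\<odot>) one)(one := e)"
proof
  assume eq: "((\<odot>) c)(one := zero) = ((\<odot>) one)(one := e)"
  have "c \<odot> neg c = neg c" using fun_cong[OF eq, of "neg c"] assms by simp
  then show False using assms by (simp add: odot_neg_self)
qed

text \<open>The count: n multiplications, the n - 1 modifications of the identity at 1, and one
  further map vanishing at 1, all pairwise distinct.\<close>

lemma card_derivations_ge:
  assumes fin: "finite (UNIV :: 'a set)"
    and cd: "c \<noteq> d" "c \<notin> {zero, one}" "d \<notin> {zero, one}"
  shows "2 * card (UNIV :: 'a set) \<le> card Der"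
proof -
  obtain c0 x0 where c0: "c0 \<notin> {zero, one}" "x0 \<noteq> one" "c0 \<odot> x0 \<noteq> zero"
    using middle_odot_nonzero[OF cd] by blast
  let ?R = "range (\<odot>)"
  let ?U = "(\<lambda>e. ((\<odot>) one)(one := e)) ` (UNIV - {one})"
  let ?f = "((\<odot>) c0)(one := zero)"
  have disjoint: "?R \<inter> ?U = {}" using odot_ne_odot_upd_one[OF _ cd(2)] by blast
  have f_R: "?f \<notin> ?R" using odot_upd_zero_ne_odot[OF c0(2,3)] by blast
  have f_U: "?f \<notin> ?U" using odot_upd_zero_ne_odot_upd_one[OF c0(1)] by blast
  have "card ?R = card (UNIV :: 'a set)" using card_image[OF inj_odot] by simp
  moreover have "inj_on (\<lambda>e. ((\<odot>) one)(one := e)) (UNIV - {one})"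
    by (rule inj_onI) (metis fun_upd_same)
  then have "card ?U = card (UNIV :: 'a set) - 1"
    by (simp add: card_image card_Diff_singleton)
  moreover have "1 \<le> card (UNIV :: 'a set)" using fin by (simp add: Suc_le_eq finite_UNIV_card_ge_0)
  ultimately have "card (?R \<union> ?U \<union> {?f}) = 2 * card (UNIV :: 'a set)"
    using fin disjoint f_R f_U by (simp add: card_Un_disjoint)
  moreover have "?R \<union> ?U \<union> {?f} \<subseteq> Der"
    using odot_in_derivations odot_upd_in_derivations[OF le_one] odot_upd_in_derivations[OF zero_le]
    by blast
  then have "card (?R \<union> ?U \<union> {?f}) \<le> card Der"
    by (rule card_mono[OF finite_derivations[OF fin]])
  ultimately show ?thesis by simp
qed

lemma card_middle_elements:
  assumes "zero \<noteq> one" and "finite (UNIV :: 'a set)"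
  shows "card (UNIV - {zero, one}) = card (UNIV :: 'a set) - 2"
  using assms by (simp add: card_Diff_subset)

lemma card_derivations_if_card_2:
  assumes nontrivial: "zero \<noteq> one" and n: "card (UNIV :: 'a set) = 2"
  shows "card Der = 2"
proof -
  have "finite (UNIV :: 'a set)" by (rule card_ge_0_finite) (simp add: n)
  then have "UNIV - {zero, one} = {}"
    using card_middle_elements[OF nontrivial] n by simp
  then have "UNIV = {zero, one}" by blast
  then show ?thesis using card_derivations_two_elements nontrivial by blast
qed

lemma card_derivations_if_card_3:
  assumes nontrivial: "zero \<noteq> one" and n: "card (UNIV :: 'a set) = 3"
  shows "card Der = 5"
proof -
  have "card (UNIV - {zero, one}) = 1"
    using card_middle_elements[OF nontrivial] n card_ge_0_finite by fastforce
  then obtain m where "UNIV - {zero, one} = {m}" by (rule card_1_singletonE)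
  then have "UNIV = {zero, m, one}" "distinct [zero, m, one]" using nontrivial by auto
  then show ?thesis by (rule card_derivations_three_elements)
qed

lemma card_derivations_if_card_4:
  assumes nontrivial: "zero \<noteq> one" and n: "card (UNIV :: 'a set) = 4"
  shows "card Der = 9"
proof -
  have "card (UNIV - {zero, one}) = 2"
    using card_middle_elements[OF nontrivial] n card_ge_0_finite by fastforce
  then obtain p q where "UNIV - {zero, one} = {p, q}" "p \<noteq> q" by (metis card_2_iff)
  then have "UNIV = {zero, p, q, one}" "distinct [zero, p, q, one]" using nontrivial by auto
  then show ?thesis by (rule card_derivations_four_elements)
qed

lemma card_derivations_if_card_ge_5:
  assumes nontrivial: "zero \<noteq> one" and fin: "finite (UNIV :: 'a set)"
    and n: "5 \<le> card (UNIV :: 'a set)"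
  shows "10 \<le> card Der"
proof -
  have "2 \<le> card (UNIV - {zero, one})" using card_middle_elements[OF nontrivial fin] n by simp
  then obtain T where "T \<subseteq> UNIV - {zero, one}" "card T = 2"
    by (rule obtain_subset_with_card_n)
  then obtain c d where "c \<noteq> d" "c \<notin> {zero, one}" "d \<notin> {zero, one}"
    by (auto simp: card_2_iff)
  then have "2 * card (UNIV :: 'a set) \<le> card Der" by (rule card_derivations_ge[OF fin])
  with n show ?thesis by simp
qed

end

theorem proposition3p16:
  fixes oplus :: "'a \<Rightarrow> 'a \<Rightarrow> 'a" and neg :: "'a \<Rightarrow> 'a" and zero :: 'a
  assumes "mv_algebra oplus neg zero"
    and "zero \<noteq> neg zero"
  shows "(card (mv_derivations oplus neg) = 2 \<longleftrightarrow> card (UNIV :: 'a set) = 2) \<and>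
         (card (mv_derivations oplus neg) = 5 \<longleftrightarrow> card (UNIV :: 'a set) = 3) \<and>
         (card (mv_derivations oplus neg) = 9 \<longleftrightarrow> card (UNIV :: 'a set) = 4)"
proof -
  interpret mv oplus neg zero by (rule mv.intro) (rule assms(1))
  consider "infinite (UNIV :: 'a set)" | "card (UNIV :: 'a set) \<in> {2, 3, 4}"
    | "finite (UNIV :: 'a set)" "5 \<le> card (UNIV :: 'a set)"
    using card_mono[of UNIV "{zero, one}"] assms(2) by fastforce
  then show ?thesis
  proof cases
    case 1
    then show ?thesis using infinite_derivations by simp
  next
    case 2
    then show ?thesis
      using card_derivations_if_card_2 card_derivations_if_card_3 card_derivations_if_card_4 assms(2)
      by auto
  next
    case 3
    then show ?thesis using card_derivations_if_card_ge_5 assms(2) by fastforce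
  qed
qed

end
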